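(* Let $d\ge1$, $k\ge1$, $\sigma>0$, and let $g:\mathcal X\times\mathbb R^d\to\mathbb R^d$ be such that for every $x\in\mathcal X$ the map $\theta\mapsto g(x,\theta)$ is Lipschitz continuous and $\|g(x,\theta)\|_2=1$ for all $x,\theta$. For a dataset $X$ let $F(X,\theta)=\sum_{x\in X}g(x,\theta)$. Let $X$ be a dataset, $x'\in\mathcal X$ and $X'=X\cup\{x'\}$. For an initial $\theta\in\mathbb R^d$, the $k$-wise adaptive composition of the Gaussian mechanism on a dataset $Z\in\{X,X'\}$ outputs $(t_1,\dots,t_k)\in(\mathbb R^d)^k$ where $t_1\sim\mathcal N(F(Z,\theta),\sigma^2I_d)$ and, conditionally on $t_{j-1}$, $t_j\sim\mathcal N(F(Z,t_{j-1}),\sigma^2I_d)$ for $2\le j\le k$; let $f_Z(\cdot;\theta)$ be its density on $\mathbb R^{kd}$. Define for Borel $S\subseteq\mathbb R$ $$\widetilde\omega(S,\theta)=\int_{\{t\in\mathbb R^{kd}:\,\log\frac{f_{X'}(t;\theta)}{f_X(t;\theta)}\in S\}}f_{X'}(t;\theta)\,dt .$$ Let $\omega$ be the privacy loss distribution of the $k$-wise non-adaptive composition of the one-dimensional Gaussian mechanism with sensitivity exactly $1$, i.e. $\omega(S)=\Pr_{u}\big(\sum_{j=1}^k\log\frac{\varphi(u_j-1)}{\varphi(u_j)}\in S\big)$ where $u_1,\dots,u_k$ are i.i.d. $\mathcal N(1,\sigma^2)$ and $\varphi$ is the density of $\mathcal N(0,\sigma^2)$. Then for all $\theta\in\mathbb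 R^d$ and all Borel $S\subseteq\mathbb R$, $\widetilde\omega(S,\theta)=\omega(S)$.
   Context: $\widetilde\omega(\cdot,\theta)$ is the privacy loss distribution (distribution of the privacy loss $\log(f_{X'}/f_X)$ under $f_{X'}$) of the adaptive composition. *)

theory Defs
  imports "HOL-Probability.Probability"
begin

definition F_sum :: "('x \<Rightarrow> 'a \<Rightarrow> 'a::euclidean_space) \<Rightarrow> 'x multiset \<Rightarrow> 'a \<Rightarrow> 'a" where
  "F_sum g Z \<theta> = sum_mset (image_mset (\<lambda>x. g x \<theta>) Z)"

text \<open>Density of N(0, sigma^2 I_d) on the euclidean space 'a (d = DIM('a)), w.r.t. lborel.\<close>
definition gauss_density :: "real \<Rightarrow> 'a::euclidean_space \<Rightarrow> real" where
  "gauss_density \<sigma> y = (\<Prod>b\<in>Basis. normal_density 0 \<sigma> (y \<bullet> b))"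

text \<open>Density of the k-wise adaptive composition of the Gaussian mechanism on dataset Z,
  started at \<theta>: outputs t 0, ..., t (k-1), with t 0 ~ N(F(Z,\<theta>), sigma^2 I) and
  t j ~ N(F(Z, t (j-1)), sigma^2 I) given t (j-1).\<close>
definition adaptive_density ::
  "('x \<Rightarrow> 'a \<Rightarrow> 'a::euclidean_space) \<Rightarrow> real \<Rightarrow> nat \<Rightarrow> 'x multiset \<Rightarrow> 'a \<Rightarrow> (nat \<Rightarrow> 'a) \<Rightarrow> real" where
  "adaptive_density g \<sigma> k Z \<theta> t =
     (\<Prod>j<k. gauss_density \<sigma> (t j - F_sum g Z (if j = 0 then \<theta> else t (j - 1))))"

definition omega_tilde ::
  "('x \<Rightarrow> 'a \<Rightarrow> 'a::euclidean_space) \<Rightarrow> real \<Rightarrow> nat \<Rightarrow> 'x multiset \<Rightarrow> 'x \<Rightarrow> real set \<Rightarrow> 'a \<Rightarrow> ennreal" where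
  "omega_tilde g \<sigma> k X x' S \<theta> =
     (\<integral>\<^sup>+ t \<in> {t \<in> space (PiM {..<k} (\<lambda>_. lborel)).
          ln (adaptive_density g \<sigma> k (add_mset x' X) \<theta> t / adaptive_density g \<sigma> k X \<theta> t) \<in> S}.
        ennreal (adaptive_density g \<sigma> k (add_mset x' X) \<theta> t) \<partial>(PiM {..<k} (\<lambda>_. lborel)))"

definition omega :: "real \<Rightarrow> nat \<Rightarrow> real set \<Rightarrow> ennreal" where
  "omega \<sigma> k S =
     emeasure (PiM {..<k} (\<lambda>_. density lborel (normal_density 1 \<sigma>)))
       {u \<in> space (PiM {..<k} (\<lambda>_. density lborel (normal_density 1 \<sigma>))).
          (\<Sum>j<k. ln (normal_density 0 \<sigma> (u j - 1) / normal_density 0 \<sigma> (u j))) \<in> S}"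

end

theory Submission imports Defs begin

(* Given the previous output p, the new output is y = F(X',p) + w with w ~ N(0, sigma^2 I), and
   the privacy loss of this step is (2 <w, e> + 1) / (2 sigma^2) with e = g(x',p) a unit vector.
   The projection of an isotropic Gaussian onto a unit vector is N(0, sigma^2), so the conditional
   law of the step loss does not depend on p and coincides with the loss law of the one-dimensional
   mechanism with sensitivity 1.  Integrating out the outputs from the last one backwards (Fubini
   and induction on k, for an arbitrary test function of the accumulated loss) therefore turns the
   adaptive composition into the non-adaptive one.  Lipschitz continuity of g is only needed for
   measurability of the query F. *)

lemma (in product_sigma_finite) PiM_density:
  assumes "finite I" and [measurable]: "\<And>i. d i \<in> borel_measurable (M i)"
  shows "PiM I (\<lambda>i. density (M i) (\<lambda>x. ennreal (d i x))) =
    density (PiM I M) (\<lambda>f. \<Prod>i\<in>I. ennreal (d i (f i)))"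
proof -
  interpret D: product_sigma_finite "\<lambda>i. density (M i) (\<lambda>x. ennreal (d i x))"
    using sigma_finite_measures
    by (simp add: product_sigma_finite_def sigma_finite_measure.sigma_finite_iff_density_finite)
  show ?thesis
  proof (rule D.PiM_eqI[OF \<open>finite I\<close>, symmetric])
    fix A assume A: "\<And>i. i \<in> I \<Longrightarrow> A i \<in> sets (density (M i) (\<lambda>x. ennreal (d i x)))"
    have "emeasure (density (PiM I M) (\<lambda>f. \<Prod>i\<in>I. ennreal (d i (f i)))) (Pi\<^sub>E I A) =
        (\<integral>\<^sup>+ f. (\<Prod>i\<in>I. ennreal (d i (f i))) * indicator (Pi\<^sub>E I A) f \<partial>PiM I M)"
      using A by (simp add: emeasure_density sets_PiM_I_finite \<open>finite I\<close>)
    also have "\<dots> = (\<integral>\<^sup>+ f. (\<Prod>i\<in>I. ennreal (d i (f i)) * indicator (A i) (f i)) \<partial>PiM I M)"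
      by (intro nn_integral_cong)
        (auto simp: prod.distrib indicator_def space_PiM PiE_def \<open>finite I\<close> Pi_iff)
    also have "\<dots> = (\<Prod>i\<in>I. emeasure (density (M i) (\<lambda>x. ennreal (d i x))) (A i))"
      using A by (subst product_nn_integral_prod) (auto simp: \<open>finite I\<close> emeasure_density)
    finally show "emeasure (density (PiM I M) (\<lambda>f. \<Prod>i\<in>I. ennreal (d i (f i)))) (Pi\<^sub>E I A) =
        (\<Prod>i\<in>I. emeasure (density (M i) (\<lambda>x. ennreal (d i x))) (A i))" .
  qed (auto intro!: sets_PiM_cong)
qed

lemma (in product_prob_space) indep_vars_PiM_components:
  assumes "I \<noteq> {}"
  shows "P.indep_vars M (\<lambda>i f. f i) I"
proof (subst P.indep_vars_iff_distr_eq_PiM'[OF assms])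
  have "distr (PiM I M) (PiM I M) (\<lambda>f. \<lambda>i\<in>I. f i) = distr (PiM I M) (PiM I M) (\<lambda>f. f)"
    by (rule distr_cong) (auto simp: space_PiM)
  also have "\<dots> = PiM I (\<lambda>i. distr (PiM I M) (M i) (\<lambda>f. f i))"
    by (simp add: distr_id2 PiM_component cong: PiM_cong)
  finally show "distr (PiM I M) (PiM I M) (\<lambda>f. \<lambda>i\<in>I. f i) = PiM I (\<lambda>i. distr (PiM I M) (M i) (\<lambda>f. f i))" .
qed (rule measurable_component_singleton)

lemma nn_integral_PiM_lessThan_Suc:
  assumes "sigma_finite_measure M" and "f \<in> borel_measurable (PiM {..<Suc k} (\<lambda>_. M))"
  shows "(\<integral>\<^sup>+ t. f t \<partial>PiM {..<Suc k} (\<lambda>_. M)) =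
    (\<integral>\<^sup>+ t. \<integral>\<^sup>+ y. f (t(k := y)) \<partial>M \<partial>PiM {..<k} (\<lambda>_. M))"
proof -
  interpret product_sigma_finite "\<lambda>_::nat. M"
    using assms(1) by (simp add: product_sigma_finite_def)
  show ?thesis
    using assms(2) by (simp add: lessThan_Suc product_nn_integral_insert)
qed

lemma sum_Basis_inner_square: "(\<Sum>b\<in>Basis. (y \<bullet> b)\<^sup>2) = (norm y)\<^sup>2"
  unfolding power2_norm_eq_inner by (simp add: euclidean_inner[of y y] power2_eq_square)

lemma nn_integral_indicator_comp:
  assumes "h \<in> borel_measurable M" and "S \<in> sets borel"
  shows "(\<integral>\<^sup>+ u. indicator S (h u) \<partial>M) = emeasure M {u \<in> space M. h u \<in> S}"
proof -
  have "{u \<in> space M. h u \<in> S} \<in> sets M"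
    using assms by measurable
  then show ?thesis
    by (simp flip: nn_integral_indicator add: indicator_def cong: nn_integral_cong)
qed

lemma measurable_gauss_density[measurable]: "gauss_density \<sigma> \<in> borel_measurable borel"
  unfolding gauss_density_def by measurable

lemma gauss_density_pos: "\<sigma> > 0 \<Longrightarrow> gauss_density \<sigma> y > 0"
  unfolding gauss_density_def by (auto intro!: prod_pos normal_density_pos)

lemma gauss_density_nonneg: "0 \<le> gauss_density \<sigma> y"
  unfolding gauss_density_def by (simp add: prod_nonneg)

lemma gauss_density_real: "gauss_density \<sigma> (x :: real) = normal_density 0 \<sigma> x"
  by (simp add: gauss_density_def)

lemma gauss_density_norm:
  "gauss_density \<sigma> (y :: 'a::euclidean_space) =
    (1 / sqrt (2 * pi * \<sigma>\<^sup>2)) ^ DIM('a) * exp (- (norm y)\<^sup>2 / (2 * \<sigma>\<^sup>2))"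
proof -
  have "(\<Prod>b\<in>Basis. exp (- (y \<bullet> b)\<^sup>2 / (2 * \<sigma>\<^sup>2))) = exp (- (norm y)\<^sup>2 / (2 * \<sigma>\<^sup>2))"
    by (simp add: exp_sum[symmetric] sum_negf sum_divide_distrib[symmetric] sum_Basis_inner_square)
  then show ?thesis
    unfolding gauss_density_def normal_density_def by (simp only: prod.distrib prod_constant diff_zero)
qed

lemma density_gauss_density:
  "density lborel (gauss_density \<sigma>) =
    distr (PiM Basis (\<lambda>_. density lborel (normal_density 0 \<sigma>))) borel (\<lambda>f. \<Sum>b\<in>Basis. f b *\<^sub>R b)"
proof -
  interpret L: product_sigma_finite "\<lambda>_::'a. lborel"
    by (simp add: product_sigma_finite_def sigma_finite_lborel)
  have "density lborel (gauss_density \<sigma>) =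
      distr (density (PiM Basis (\<lambda>_. lborel)) (\<lambda>f. gauss_density \<sigma> (\<Sum>b\<in>Basis. f b *\<^sub>R b)))
        borel (\<lambda>f. \<Sum>b\<in>(Basis::'a set). f b *\<^sub>R b)"
    by (subst lborel_eq) (rule density_distr, measurable)
  also have "density (PiM Basis (\<lambda>_. lborel)) (\<lambda>f. gauss_density \<sigma> (\<Sum>b\<in>Basis. f b *\<^sub>R b)) =
      density (PiM Basis (\<lambda>_. lborel)) (\<lambda>f. \<Prod>b\<in>(Basis::'a set). ennreal (normal_density 0 \<sigma> (f b)))"
    by (intro density_cong)
      (auto simp: gauss_density_def inner_sum_left inner_Basis if_distrib prod_ennreal cong: if_cong)
  also have "\<dots> = PiM Basis (\<lambda>_. density lborel (normal_density 0 \<sigma>))"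
    by (rule L.PiM_density[symmetric]) auto
  finally show ?thesis .
qed

lemma distr_gauss_density_inner_unit:
  fixes u :: "'a::euclidean_space"
  assumes "\<sigma> > 0" and "norm u = 1"
  shows "distr (density lborel (gauss_density \<sigma>)) lborel (\<lambda>w. w \<bullet> u) =
    density lborel (normal_density 0 \<sigma>)"
proof -
  define N where "N = density lborel (normal_density 0 \<sigma>)"
  \<comment> \<open>\<open>sum_indep_normal\<close> needs positive variances, so keep only the coordinates not orthogonal to \<open>u\<close>\<close>
  define I where "I = {b\<in>(Basis::'a set). b \<bullet> u \<noteq> 0}"
  let ?Q = "PiM (Basis::'a set) (\<lambda>_. N)"
  interpret Q: product_prob_space "\<lambda>_. N" "Basis::'a set"
    using prob_space_normal_density[OF \<open>\<sigma> > 0\<close>]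
    by (simp add: N_def product_prob_space_def product_sigma_finite_def product_prob_space_axioms_def
        prob_space_imp_sigma_finite)
  have sets_N[measurable_cong]: "sets N = sets borel"
    by (simp add: N_def)
  have coordinate: "distributed ?Q lborel (\<lambda>f. f b) (normal_density 0 \<sigma>)" if "b \<in> Basis" for b
  proof -
    have "distr ?Q lborel (\<lambda>f. f b) = distr ?Q N (\<lambda>f. f b)"
      by (rule distr_cong) (simp_all add: sets_N)
    also have "\<dots> = N"
      using that by (rule Q.PiM_component)
    finally show ?thesis
      using that measurable_component_singleton[OF that, of "\<lambda>_. N"]
      by (simp add: distributed_def N_def measurable_cong_sets[OF refl sets_N])
  qed
  have scaled: "distributed ?Q lborel (\<lambda>f. (b \<bullet> u) * f b) (normal_density 0 (\<bar>b \<bullet> u\<bar> * \<sigma>))"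
    if "b \<in> I" for b
    using Q.normal_density_affine[OF coordinate \<open>\<sigma> > 0\<close>, of b "b \<bullet> u" 0] that by (simp add: I_def)
  have "Q.indep_vars (\<lambda>_. borel) (\<lambda>b f. (b \<bullet> u) * f b) Basis"
    by (rule Q.indep_vars_compose2[OF Q.indep_vars_PiM_components]) (simp_all add: sets_N)
  then have indep: "Q.indep_vars (\<lambda>_. borel) (\<lambda>b f. (b \<bullet> u) * f b) I"
    by (rule Q.indep_vars_subset) (auto simp: I_def)
  have "(\<Sum>b\<in>I. (b \<bullet> u)\<^sup>2) = (\<Sum>b\<in>Basis. (u \<bullet> b)\<^sup>2)"
    by (subst inner_commute, rule sum.mono_neutral_left) (auto simp: I_def)
  then have variance: "(\<Sum>b\<in>I. (\<bar>b \<bullet> u\<bar> * \<sigma>)\<^sup>2) = \<sigma>\<^sup>2"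
    using \<open>norm u = 1\<close> by (simp add: power_mult_distrib sum_distrib_right[symmetric] sum_Basis_inner_square)
  have "I \<noteq> {}"
    using \<open>norm u = 1\<close> euclidean_all_zero_iff[of u] by (auto simp: I_def inner_commute)
  then have "distributed ?Q lborel (\<lambda>f. \<Sum>b\<in>I. (b \<bullet> u) * f b) (normal_density 0 \<sigma>)"
    using Q.sum_indep_normal[OF _ _ indep _ scaled] \<open>\<sigma> > 0\<close>
    by (simp add: variance) (simp_all add: I_def)
  then have projected: "distr ?Q lborel (\<lambda>f. \<Sum>b\<in>I. (b \<bullet> u) * f b) = N"
    unfolding N_def by (rule distributed_distr_eq_density)
  have "distr (density lborel (gauss_density \<sigma>)) lborel (\<lambda>w. w \<bullet> u) =
      distr ?Q lborel (\<lambda>f. (\<Sum>b\<in>Basis. f b *\<^sub>R b) \<bullet> u)"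
    unfolding density_gauss_density N_def by (subst distr_distr) (simp_all add: comp_def)
  also have "\<dots> = distr ?Q lborel (\<lambda>f. \<Sum>b\<in>I. (b \<bullet> u) * f b)"
    unfolding inner_sum_left
    by (intro distr_cong refl sum.mono_neutral_cong_right) (auto simp: I_def)
  finally show ?thesis
    using projected by (simp add: N_def)
qed

lemma normal_density_shift: "normal_density \<mu> \<sigma> x = normal_density 0 \<sigma> (x - \<mu>)"
  by (simp add: normal_density_def)

lemma ln_gauss_density_ratio_shift:
  assumes "\<sigma> > 0" and "norm e = 1"
  shows "ln (gauss_density \<sigma> w / gauss_density \<sigma> (w + e)) = (2 * (w \<bullet> e) + 1) / (2 * \<sigma>\<^sup>2)"
proof -
  have "e \<bullet> e = 1"
    using \<open>norm e = 1\<close> by (simp add: norm_eq_1)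
  then have "(norm (w + e))\<^sup>2 = (norm w)\<^sup>2 + 2 * (w \<bullet> e) + 1"
    by (simp add: power2_norm_eq_inner inner_add_left inner_add_right inner_commute)
  then have "gauss_density \<sigma> w / gauss_density \<sigma> (w + e) = exp ((2 * (w \<bullet> e) + 1) / (2 * \<sigma>\<^sup>2))"
    using \<open>\<sigma> > 0\<close> by (simp add: gauss_density_norm exp_diff[symmetric] field_simps)
  then show ?thesis
    by simp
qed

lemma nn_integral_gauss_privacy_loss:
  fixes a e :: "'a::euclidean_space" and \<phi> :: "real \<Rightarrow> ennreal"
  assumes "\<sigma> > 0" and "norm e = 1" and [measurable]: "\<phi> \<in> borel_measurable borel"
  shows "(\<integral>\<^sup>+ y. gauss_density \<sigma> (y - (a + e)) *
      \<phi> (ln (gauss_density \<sigma> (y - (a + e)) / gauss_density \<sigma> (y - a))) \<partial>lborel) =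
    (\<integral>\<^sup>+ v. normal_density 0 \<sigma> v * \<phi> ((2 * v + 1) / (2 * \<sigma>\<^sup>2)) \<partial>lborel)"
proof -
  have "(\<integral>\<^sup>+ y. gauss_density \<sigma> (y - (a + e)) *
      \<phi> (ln (gauss_density \<sigma> (y - (a + e)) / gauss_density \<sigma> (y - a))) \<partial>lborel) =
    (\<integral>\<^sup>+ w. gauss_density \<sigma> w * \<phi> ((2 * (w \<bullet> e) + 1) / (2 * \<sigma>\<^sup>2)) \<partial>lborel)"
    by (subst lborel_distr_plus[symmetric, of "a + e"], subst nn_integral_distr)
      (simp_all add: ln_gauss_density_ratio_shift[OF assms(1,2)] add.commute add.left_commute)
  also have "\<dots> = (\<integral>\<^sup>+ v. \<phi> ((2 * v + 1) / (2 * \<sigma>\<^sup>2))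
      \<partial>distr (density lborel (gauss_density \<sigma>)) lborel (\<lambda>w. w \<bullet> e))"
    by (simp add: nn_integral_distr nn_integral_density)
  also have "\<dots> = (\<integral>\<^sup>+ v. normal_density 0 \<sigma> v * \<phi> ((2 * v + 1) / (2 * \<sigma>\<^sup>2)) \<partial>lborel)"
    by (simp add: distr_gauss_density_inner_unit[OF assms(1,2)] nn_integral_density)
  finally show ?thesis .
qed

lemma nn_integral_gauss_privacy_loss_eq_normal:
  fixes a e :: "'a::euclidean_space" and \<phi> :: "real \<Rightarrow> ennreal"
  assumes "\<sigma> > 0" and "norm e = 1" and [measurable]: "\<phi> \<in> borel_measurable borel"
  shows "(\<integral>\<^sup>+ y. gauss_density \<sigma> (y - (a + e)) *
      \<phi> (ln (gauss_density \<sigma> (y - (a + e)) / gauss_density \<sigma> (y - a))) \<partial>lborel) =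
    (\<integral>\<^sup>+ u. \<phi> (ln (normal_density 0 \<sigma> (u - 1) / normal_density 0 \<sigma> u))
      \<partial>density lborel (normal_density 1 \<sigma>))"
proof -
  \<comment> \<open>the one-dimensional mechanism is the instance \<open>a = 0\<close>, \<open>e = 1\<close> of the same computation\<close>
  have "(\<integral>\<^sup>+ u. \<phi> (ln (normal_density 0 \<sigma> (u - 1) / normal_density 0 \<sigma> u))
      \<partial>density lborel (normal_density 1 \<sigma>)) =
    (\<integral>\<^sup>+ u. gauss_density \<sigma> ((u :: real) - (0 + 1)) *
      \<phi> (ln (gauss_density \<sigma> (u - (0 + 1)) / gauss_density \<sigma> (u - 0))) \<partial>lborel)"
    by (simp add: nn_integral_density gauss_density_real normal_density_shift[of 1])
  with nn_integral_gauss_privacy_loss[OF assms(1) _ assms(3), of "1 :: real" 0]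
    nn_integral_gauss_privacy_loss[OF assms, of a]
  show ?thesis
    by simp
qed

definition prev_output :: "'a \<Rightarrow> (nat \<Rightarrow> 'a) \<Rightarrow> nat \<Rightarrow> 'a" where
  "prev_output \<theta> t j = (if j = 0 then \<theta> else t (j - 1))"

definition gauss_chain_density :: "real \<Rightarrow> ('a::euclidean_space \<Rightarrow> 'a) \<Rightarrow> 'a \<Rightarrow> nat \<Rightarrow> (nat \<Rightarrow> 'a) \<Rightarrow> real"
  where "gauss_chain_density \<sigma> \<mu> \<theta> k t = (\<Prod>j<k. gauss_density \<sigma> (t j - \<mu> (prev_output \<theta> t j)))"

definition gauss_chain_privacy_loss ::
    "real \<Rightarrow> ('a::euclidean_space \<Rightarrow> 'a) \<Rightarrow> ('a \<Rightarrow> 'a) \<Rightarrow> 'a \<Rightarrow> nat \<Rightarrow> (nat \<Rightarrow> 'a) \<Rightarrow> real"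
  where "gauss_chain_privacy_loss \<sigma> \<mu>' \<mu> \<theta> k t =
    (\<Sum>j<k. ln (gauss_density \<sigma> (t j - \<mu>' (prev_output \<theta> t j)) / gauss_density \<sigma> (t j - \<mu> (prev_output \<theta> t j))))"

lemma measurable_gauss_chain_density[measurable]:
  assumes [measurable]: "\<mu> \<in> borel_measurable borel"
  shows "gauss_chain_density \<sigma> \<mu> \<theta> k \<in> borel_measurable (PiM {..<k} (\<lambda>_. lborel))"
  unfolding gauss_chain_density_def prev_output_def by measurable

lemma measurable_gauss_chain_privacy_loss[measurable]:
  assumes [measurable]: "\<mu>' \<in> borel_measurable borel" "\<mu> \<in> borel_measurable borel"
  shows "gauss_chain_privacy_loss \<sigma> \<mu>' \<mu> \<theta> k \<in> borel_measurable (PiM {..<k} (\<lambda>_. lborel))"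
  unfolding gauss_chain_privacy_loss_def prev_output_def by measurable

lemma gauss_chain_density_nonneg: "0 \<le> gauss_chain_density \<sigma> \<mu> \<theta> k t"
  unfolding gauss_chain_density_def by (simp add: prod_nonneg gauss_density_nonneg)

lemma gauss_chain_density_Suc_upd:
  "gauss_chain_density \<sigma> \<mu> \<theta> (Suc k) (t(k := y)) =
    gauss_chain_density \<sigma> \<mu> \<theta> k t * gauss_density \<sigma> (y - \<mu> (prev_output \<theta> t k))"
  by (auto simp: gauss_chain_density_def prev_output_def intro!: prod.cong)

lemma gauss_chain_privacy_loss_Suc_upd:
  "gauss_chain_privacy_loss \<sigma> \<mu>' \<mu> \<theta> (Suc k) (t(k := y)) = gauss_chain_privacy_loss \<sigma> \<mu>' \<mu> \<theta> k t +
    ln (gauss_density \<sigma> (y - \<mu>' (prev_output \<theta> t k)) / gauss_density \<sigma> (y - \<mu> (prev_output \<theta> t k)))"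
  by (auto simp: gauss_chain_privacy_loss_def prev_output_def intro!: sum.cong)

lemma nn_integral_gauss_chain_privacy_loss:
  fixes \<mu>' \<mu> :: "'a::euclidean_space \<Rightarrow> 'a" and \<Phi> :: "real \<Rightarrow> ennreal"
  assumes "\<sigma> > 0" and [measurable]: "\<mu>' \<in> borel_measurable borel" "\<mu> \<in> borel_measurable borel"
    and unit: "\<And>p. norm (\<mu>' p - \<mu> p) = 1" and "\<Phi> \<in> borel_measurable borel"
  shows "(\<integral>\<^sup>+ t. gauss_chain_density \<sigma> \<mu>' \<theta> k t * \<Phi> (gauss_chain_privacy_loss \<sigma> \<mu>' \<mu> \<theta> k t)
      \<partial>PiM {..<k} (\<lambda>_. lborel)) =
    (\<integral>\<^sup>+ u. \<Phi> (\<Sum>j<k. ln (normal_density 0 \<sigma> (u j - 1) / normal_density 0 \<sigma> (u j)))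
      \<partial>PiM {..<k} (\<lambda>_. density lborel (normal_density 1 \<sigma>)))"
  using \<open>\<Phi> \<in> borel_measurable borel\<close>
proof (induction k arbitrary: \<Phi>)
  case 0
  then show ?case
    by (simp add: PiM_empty gauss_chain_density_def gauss_chain_privacy_loss_def)
next
  case (Suc k)
  note [measurable] = Suc.prems
  let ?N = "density lborel (normal_density 1 \<sigma>)"
  let ?loss = "\<lambda>u. ln (normal_density 0 \<sigma> (u - 1) / normal_density 0 \<sigma> u)"
  define \<Psi> where "\<Psi> c = (\<integral>\<^sup>+ u. \<Phi> (c + ?loss u) \<partial>?N)" for c
  have "\<Psi> = (\<lambda>c. \<integral>\<^sup>+ u. normal_density 1 \<sigma> u * \<Phi> (c + ?loss u) \<partial>lborel)"
    by (simp add: \<Psi>_def fun_eq_iff nn_integral_density)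
  then have [measurable]: "\<Psi> \<in> borel_measurable borel"
    by simp
  have loss_upd: "(\<Sum>j<k. ?loss ((u(k := y)) j)) = (\<Sum>j<k. ?loss (u j))" for u y
    by (rule sum.cong) auto
  have sigma_finite_N: "sigma_finite_measure ?N"
    using \<open>\<sigma> > 0\<close> by (simp add: prob_space_normal_density prob_space_imp_sigma_finite)
  have last_output: "(\<integral>\<^sup>+ y. gauss_density \<sigma> (y - \<mu>' p) *
      \<Phi> (c + ln (gauss_density \<sigma> (y - \<mu>' p) / gauss_density \<sigma> (y - \<mu> p))) \<partial>lborel) = \<Psi> c" for p c
    using nn_integral_gauss_privacy_loss_eq_normal[OF \<open>\<sigma> > 0\<close> unit[of p], of "\<lambda>x. \<Phi> (c + x)" "\<mu> p"]
    by (simp add: \<Psi>_def)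
  have "(\<integral>\<^sup>+ t. gauss_chain_density \<sigma> \<mu>' \<theta> (Suc k) t * \<Phi> (gauss_chain_privacy_loss \<sigma> \<mu>' \<mu> \<theta> (Suc k) t)
      \<partial>PiM {..<Suc k} (\<lambda>_. lborel)) =
    (\<integral>\<^sup>+ t. gauss_chain_density \<sigma> \<mu>' \<theta> k t * \<Psi> (gauss_chain_privacy_loss \<sigma> \<mu>' \<mu> \<theta> k t)
      \<partial>PiM {..<k} (\<lambda>_. lborel))"
    by (simp add: nn_integral_PiM_lessThan_Suc sigma_finite_lborel gauss_chain_density_Suc_upd
        gauss_chain_privacy_loss_Suc_upd ennreal_mult gauss_chain_density_nonneg gauss_density_nonneg
        mult.assoc nn_integral_cmult last_output)
  also have "\<dots> = (\<integral>\<^sup>+ u. \<Psi> (\<Sum>j<k. ?loss (u j)) \<partial>PiM {..<k} (\<lambda>_. ?N))"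
    by (rule Suc.IH) measurable
  also have "\<dots> = (\<integral>\<^sup>+ u. \<Phi> (\<Sum>j<Suc k. ?loss (u j)) \<partial>PiM {..<Suc k} (\<lambda>_. ?N))"
    by (simp add: nn_integral_PiM_lessThan_Suc[OF sigma_finite_N] \<Psi>_def loss_upd)
  finally show ?case .
qed

lemma ln_gauss_chain_density_ratio:
  assumes "\<sigma> > 0"
  shows "ln (gauss_chain_density \<sigma> \<mu>' \<theta> k t / gauss_chain_density \<sigma> \<mu> \<theta> k t) =
    gauss_chain_privacy_loss \<sigma> \<mu>' \<mu> \<theta> k t"
proof -
  have "gauss_density \<sigma> y \<noteq> 0" for y
    using gauss_density_pos[OF assms] by (metis less_irrefl)
  then show ?thesis
    unfolding gauss_chain_density_def gauss_chain_privacy_loss_def prod_dividef[symmetric]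
    by (intro ln_prod) auto
qed

lemma adaptive_density_eq_gauss_chain_density:
  "adaptive_density g \<sigma> k Z \<theta> = gauss_chain_density \<sigma> (F_sum g Z) \<theta> k"
  by (simp add: fun_eq_iff adaptive_density_def gauss_chain_density_def prev_output_def)

lemma continuous_on_F_sum:
  assumes "\<And>x. continuous_on UNIV (g x)"
  shows "continuous_on UNIV (F_sum g Z)"
proof (induction Z)
  case empty
  then show ?case
    by (simp add: F_sum_def)
next
  case (add x Z)
  then show ?case
    using assms by (simp add: F_sum_def continuous_on_add)
qed

theorem mainTheorem10:
  fixes g :: "'x \<Rightarrow> 'a::euclidean_space \<Rightarrow> 'a"
    and \<sigma> :: real and k :: nat and X :: "'x multiset" and x' :: 'x
    and \<theta> :: 'a and S :: "real set"
  assumes "k \<ge> 1" and "\<sigma> > 0"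
    and "\<And>x. \<exists>C. C-lipschitz_on UNIV (g x)"
    and "\<And>x \<theta>. norm (g x \<theta>) = 1"
    and "S \<in> sets borel"
  shows "omega_tilde g \<sigma> k X x' S \<theta> = omega \<sigma> k S"
proof -
  note [measurable] = \<open>S \<in> sets borel\<close>
  have "continuous_on UNIV (F_sum g Z)" for Z
    using assms(3) lipschitz_on_continuous_on by (blast intro: continuous_on_F_sum)
  then have [measurable]: "F_sum g Z \<in> borel_measurable borel" for Z
    by (rule borel_measurable_continuous_onI)
  have unit: "norm (F_sum g (add_mset x' X) p - F_sum g X p) = 1" for p
    using assms(4) by (simp add: F_sum_def)
  have "omega_tilde g \<sigma> k X x' S \<theta> =
      (\<integral>\<^sup>+ t. ennreal (gauss_chain_density \<sigma> (F_sum g (add_mset x' X)) \<theta> k t) *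
        indicator S (gauss_chain_privacy_loss \<sigma> (F_sum g (add_mset x' X)) (F_sum g X) \<theta> k t)
        \<partial>PiM {..<k} (\<lambda>_. lborel))"
    unfolding omega_tilde_def adaptive_density_eq_gauss_chain_density
      ln_gauss_chain_density_ratio[OF \<open>\<sigma> > 0\<close>]
    by (intro nn_integral_cong) (simp add: indicator_def)
  also have "\<dots> = (\<integral>\<^sup>+ u. indicator S (\<Sum>j<k. ln (normal_density 0 \<sigma> (u j - 1) / normal_density 0 \<sigma> (u j)))
      \<partial>PiM {..<k} (\<lambda>_. density lborel (normal_density 1 \<sigma>)))"
    by (rule nn_integral_gauss_chain_privacy_loss[OF \<open>\<sigma> > 0\<close> _ _ unit]) measurable
  also have "\<dots> = omega \<sigma> k S"
    unfolding omega_def by (rule nn_integral_indicator_comp) measurable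
  finally show ?thesis .
qed

end
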